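(* Let $p$ be an odd prime, $c\in\mathbb Z_p$ with $c\not\equiv0,\pm1\pmod p$ and $c^2+1\not\equiv0\pmod p$. Then the congruence $x^4-2(c^2+1)x^2+c^2(c^2+1)\equiv0\pmod p$ is solvable if and only if $$\sum_{k=1}^{[p/4]}\binom{4k}{2k}\frac1{(16(c^2+1))^k}\equiv0\pmod p.$$
   Context: $[x]$ is the greatest integer $\le x$; $\mathbb Z_p$ is the set of rational numbers whose denominator is not divisible by $p$. *)

theory Defs
  imports Complex_Main "HOL-Computational_Algebra.Primes"
begin

definition in_Zp :: "nat \<Rightarrow> rat \<Rightarrow> bool" where
  "in_Zp p r \<longleftrightarrow> \<not> int p dvd snd (quotient_of r)"

text \<open>Congruence modulo p between elements of Z_p: a = b (mod p) iff a - b lies in p Z_p,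
  i.e. both are in Z_p and the reduced numerator of a - b is divisible by p.\<close>
definition rat_cong :: "rat \<Rightarrow> rat \<Rightarrow> nat \<Rightarrow> bool" where
  "rat_cong a b p \<longleftrightarrow> in_Zp p a \<and> in_Zp p b \<and> int p dvd fst (quotient_of (a - b))"

end

theory Submission
  imports Defs "HOL-Number_Theory.Number_Theory"
begin

text \<open>
  Let \<open>a = c\<^sup>2 + 1\<close>, \<open>s \<equiv> 1/a\<close> and \<open>n = (p - 1)/2\<close>. Since
  \<open>x\<^sup>4 - 2 a x\<^sup>2 + c\<^sup>2 a = (x\<^sup>2 - a)\<^sup>2 - a\<close>, the quartic has a root iff \<open>(s x\<^sup>2 - 1)\<^sup>2 \<equiv> s\<close> does.
  Since \<open>binom (4k) (2k) \<equiv> 16^k binom n (2k)\<close>, the sum is \<open>\<equiv> E - 1\<close> with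
  \<open>E = \<Sum>\<^sub>k binom n (2k) s^k\<close>, the even part of \<open>(1 + \<surd>s)^n\<close>.
  If \<open>s \<equiv> r\<^sup>2\<close>, then \<open>2E \<equiv> (1 + r)^n + (1 - r)^n\<close> is twice the common Legendre symbol of
  \<open>1 \<plusminus> r\<close> (their product \<open>1 - s \<equiv> (c r)\<^sup>2\<close> is a square), so \<open>E \<equiv> 1\<close> iff \<open>1 \<plusminus> r\<close> are squares,
  iff \<open>s x\<^sup>2 \<equiv> 1 \<plusminus> r\<close> is solvable. If \<open>s\<close> is a non-residue, the quartic has no root, and
  computing \<open>(1 + \<surd>s)^(p - 1)\<close> in two ways shows that \<open>E \<equiv> 1\<close> would force \<open>2 s \<equiv> 1\<close>,
  i.e. \<open>c\<^sup>2 \<equiv> 1\<close>.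
\<close>

section \<open>Arithmetic modulo an odd prime\<close>

lemma odd_prime_not_dvd_power_2:
  assumes "prime p" and "odd p"
  shows "\<not> int p dvd 2 ^ k"
proof
  assume "int p dvd 2 ^ k"
  then have "int p dvd 2"
    using assms(1) prime_dvd_power[of "int p"] by simp
  then have "p dvd 2"
    by (metis int_dvd_int_iff of_nat_numeral)
  then have "p = 2"
    using prime_ge_2_nat[OF assms(1)] dvd_imp_le[of p 2] by linarith
  then show False
    using assms(2) by simp
qed

lemma odd_prime_one_not_cong_neg_one:
  assumes "prime p" and "odd p"
  shows "\<not> [1 = - 1] (mod int p)"
  using odd_prime_not_dvd_power_2[OF assms, of 1] by (simp add: cong_iff_dvd_diff)

lemma cong_mult_lcancel_prime:
  fixes a b k :: int
  assumes "prime p" and "\<not> [k = 0] (mod int p)"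
  shows "[k * a = k * b] (mod int p) \<longleftrightarrow> [a = b] (mod int p)"
proof -
  have "coprime k (int p)"
    using assms prime_imp_coprime[of "int p" k] by (simp add: cong_0_iff coprime_commute)
  then show ?thesis
    by (rule cong_mult_lcancel)
qed

lemma cong_mult_2_cancel_odd_prime:
  fixes a b :: int
  assumes "prime p" and "odd p"
  shows "[2 * a = 2 * b] (mod int p) \<longleftrightarrow> [a = b] (mod int p)"
  using cong_mult_lcancel_prime[OF assms(1), of 2] odd_prime_not_dvd_power_2[OF assms, of 1]
  by (simp add: cong_0_iff)

lemma prime_cong_inverse_exists:
  fixes u :: int
  assumes "prime p" and "\<not> [u = 0] (mod int p)"
  obtains u' where "[u * u' = 1] (mod int p)"
proof -
  have "coprime u (int p)"
    using assms prime_imp_coprime[of "int p" u] by (simp add: cong_0_iff coprime_commute)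
  then show ?thesis
    using that cong_solve_coprime_int by blast
qed

lemma not_cong_0_if_cong_mult_eq_1:
  fixes a b :: int
  assumes "prime p" and "[a * b = 1] (mod int p)"
  shows "\<not> [a = 0] (mod int p)"
proof
  assume "[a = 0] (mod int p)"
  then have "int p dvd a * b"
    by (simp add: cong_0_iff)
  moreover have "int p dvd a * b - 1"
    using assms(2) by (simp add: cong_iff_dvd_diff)
  ultimately have "int p dvd a * b - (a * b - 1)"
    by (rule dvd_diff)
  then have "int p dvd 1"
    by simp
  then show False
    using assms(1) by simp
qed

lemma cong_mult_eq_0_prime_iff:
  fixes a b :: int
  assumes "prime p"
  shows "[a * b = 0] (mod int p) \<longleftrightarrow> [a = 0] (mod int p) \<or> [b = 0] (mod int p)"
  using assms by (simp add: cong_0_iff prime_dvd_mult_iff)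

lemma cong_square_iff:
  fixes u v :: int
  assumes "prime p"
  shows "[u\<^sup>2 = v\<^sup>2] (mod int p) \<longleftrightarrow> [u = v] (mod int p) \<or> [u = - v] (mod int p)"
proof -
  have "u\<^sup>2 - v\<^sup>2 = (u - v) * (u - - v)"
    by (simp add: power2_eq_square algebra_simps)
  then show ?thesis
    using cong_mult_eq_0_prime_iff[OF assms, of "u - v" "u - - v"]
    by (simp only: cong_iff_dvd_diff cong_0_iff diff_0_right)
qed

section \<open>Reduction of \<open>p\<close>-integral rationals modulo \<open>p\<close>\<close>

lemma quotient_of_int_frac:
  fixes a b :: int
  assumes "b \<noteq> 0" and "quotient_of (of_int a / of_int b) = (N, D)"
  shows "D dvd b" and "N * b = a * D"
proof -
  have "D > 0" and "coprime N D" and "of_int a / of_int b = (of_int N / of_int D :: rat)"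
    using assms(2) quotient_of_denom_pos quotient_of_coprime quotient_of_div by blast+
  then show "N * b = a * D"
    using assms(1) by (simp add: field_simps) (metis of_int_eq_iff of_int_mult)
  then show "D dvd b"
    using \<open>coprime N D\<close> by (metis coprime_commute coprime_dvd_mult_right_iff dvd_triv_right)
qed

lemma in_Zp_int_frac:
  fixes a b :: int
  assumes "b \<noteq> 0" and "\<not> int p dvd b"
  shows "in_Zp p (of_int a / of_int b)"
  using assms quotient_of_int_frac(1)[OF assms(1)] dvd_trans
  by (cases "quotient_of (of_int a / of_int b :: rat)") (fastforce simp: in_Zp_def)

lemma numerator_int_frac_dvd_iff:
  fixes a b :: int
  assumes "prime p" and "b \<noteq> 0" and "\<not> int p dvd b"
  shows "int p dvd fst (quotient_of (of_int a / of_int b)) \<longleftrightarrow> int p dvd a"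
proof -
  obtain N D where q: "quotient_of (of_int a / of_int b :: rat) = (N, D)"
    by (cases "quotient_of (of_int a / of_int b :: rat)") auto
  have "\<not> int p dvd D"
    using quotient_of_int_frac(1)[OF assms(2) q] assms(3) dvd_trans by blast
  moreover have "prime (int p)"
    using assms(1) by simp
  ultimately show ?thesis
    using quotient_of_int_frac(2)[OF assms(2) q] assms(3) q
    by (metis fst_conv dvd_mult2 prime_dvd_mult_iff)
qed

lemma rat_cong_int_frac_iff:
  fixes a b m :: int
  assumes "prime p" and "b \<noteq> 0" and "\<not> int p dvd b"
  shows "rat_cong (of_int a / of_int b) (of_int m) p \<longleftrightarrow> [a = m * b] (mod int p)"
proof -
  have "of_int a / of_int b - of_int m = (of_int (a - m * b) / of_int b :: rat)"
    using assms(2) by (simp add: field_simps)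
  then have "int p dvd fst (quotient_of (of_int a / of_int b - of_int m)) \<longleftrightarrow> int p dvd a - m * b"
    using numerator_int_frac_dvd_iff[OF assms] by presburger
  moreover have "in_Zp p (of_int m)"
    using in_Zp_int_frac[of 1 p m] assms(1) by (cases "p = 1") auto
  ultimately show ?thesis
    using in_Zp_int_frac[OF assms(2,3)] by (simp add: rat_cong_def cong_iff_dvd_diff)
qed

text \<open>\<open>rat_cong r (of_int m) p\<close> says that \<open>r \<in> \<int>\<^sub>p\<close> reduces to \<open>m\<close> modulo \<open>p\<close>;
  the lemmas below show that this reduction is a ring homomorphism \<open>\<int>\<^sub>p \<rightarrow> \<int>/p\<close>.\<close>

lemma rat_cong_of_intE:
  assumes "prime p" and "rat_cong r (of_int m) p"
  obtains a b where "b \<noteq> 0" "\<not> int p dvd b" "r = of_int a / of_int b" "[a = m * b] (mod int p)"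
proof -
  obtain a b where q: "quotient_of r = (a, b)"
    by (cases "quotient_of r") auto
  have "b \<noteq> 0" and "r = of_int a / of_int b"
    using q quotient_of_denom_pos quotient_of_div by fastforce+
  moreover have "\<not> int p dvd b"
    using assms(2) q by (simp add: rat_cong_def in_Zp_def)
  ultimately show ?thesis
    using that assms rat_cong_int_frac_iff by blast
qed

lemma rat_cong_of_int_cong_iff:
  assumes "prime p" and "rat_cong r (of_int m) p"
  shows "rat_cong r (of_int m') p \<longleftrightarrow> [m = m'] (mod int p)"
proof -
  obtain a b where b: "b \<noteq> 0" "\<not> int p dvd b" and r: "r = of_int a / of_int b"
    and a: "[a = m * b] (mod int p)"
    using rat_cong_of_intE[OF assms] .
  have "coprime b (int p)"
    using assms(1) b(2) prime_imp_coprime[of "int p" b] by (simp add: coprime_commute)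
  then have "[a = m' * b] (mod int p) \<longleftrightarrow> [m = m'] (mod int p)"
    using a by (metis cong_mult_rcancel cong_sym cong_trans)
  then show ?thesis
    using rat_cong_int_frac_iff[OF assms(1) b] r by simp
qed

lemma rat_cong_0_iff:
  assumes "prime p" and "rat_cong r (of_int m) p"
  shows "rat_cong r 0 p \<longleftrightarrow> [m = 0] (mod int p)"
  using rat_cong_of_int_cong_iff[OF assms, of 0] by simp

lemma in_Zp_imp_rat_cong_of_int:
  assumes "prime p" and "in_Zp p r"
  obtains m where "rat_cong r (of_int m) p"
proof -
  obtain a b where q: "quotient_of r = (a, b)"
    by (cases "quotient_of r") auto
  have b: "b \<noteq> 0" "\<not> int p dvd b" and r: "r = of_int a / of_int b"
    using q assms(2) quotient_of_denom_pos quotient_of_div by (fastforce simp: in_Zp_def)+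
  obtain b' where "[b * b' = 1] (mod int p)"
    using prime_cong_inverse_exists[OF assms(1)] b(2) by (auto simp: cong_0_iff)
  then have "[a = (a * b') * b] (mod int p)"
    using cong_scalar_left[of "b * b'" 1 "int p" a] by (simp add: cong_sym_eq ac_simps)
  then show ?thesis
    using that rat_cong_int_frac_iff[OF assms(1) b] r by blast
qed

lemma rat_cong_of_int_of_int:
  assumes "prime p"
  shows "rat_cong (of_int m) (of_int m) p"
  using rat_cong_int_frac_iff[OF assms, of 1 m m] assms by (cases "p = 1") auto

lemma rat_cong_numeral:
  assumes "prime p"
  shows "rat_cong (numeral k) (of_int (numeral k)) p"
  using rat_cong_of_int_of_int[OF assms, of "numeral k"] by simp

lemma rat_cong_one:
  assumes "prime p"
  shows "rat_cong 1 (of_int 1) p"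
  using rat_cong_of_int_of_int[OF assms, of 1] by simp

lemma rat_cong_add:
  assumes "prime p" and "rat_cong r (of_int m) p" and "rat_cong r' (of_int m') p"
  shows "rat_cong (r + r') (of_int (m + m')) p"
proof -
  obtain a b where b: "b \<noteq> 0" "\<not> int p dvd b" and r: "r = of_int a / of_int b"
    and a: "[a = m * b] (mod int p)"
    using rat_cong_of_intE[OF assms(1,2)] .
  obtain a' b' where b': "b' \<noteq> 0" "\<not> int p dvd b'" and r': "r' = of_int a' / of_int b'"
    and a': "[a' = m' * b'] (mod int p)"
    using rat_cong_of_intE[OF assms(1,3)] .
  have "b * b' \<noteq> 0" and "\<not> int p dvd b * b'"
    using assms(1) b b' by (simp_all add: prime_dvd_mult_iff)
  moreover have "[a * b' + a' * b = (m + m') * (b * b')] (mod int p)"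
    using cong_add[OF cong_mult[OF a cong_refl] cong_mult[OF a' cong_refl], of b' b]
    by (simp add: algebra_simps)
  ultimately have "rat_cong (of_int (a * b' + a' * b) / of_int (b * b')) (of_int (m + m')) p"
    using rat_cong_int_frac_iff[OF assms(1)] by blast
  moreover have "r + r' = of_int (a * b' + a' * b) / of_int (b * b')"
    using b b' by (simp add: r r' field_simps)
  ultimately show ?thesis
    by (simp only:)
qed

lemma rat_cong_mult:
  assumes "prime p" and "rat_cong r (of_int m) p" and "rat_cong r' (of_int m') p"
  shows "rat_cong (r * r') (of_int (m * m')) p"
proof -
  obtain a b where b: "b \<noteq> 0" "\<not> int p dvd b" and r: "r = of_int a / of_int b"
    and a: "[a = m * b] (mod int p)"
    using rat_cong_of_intE[OF assms(1,2)] .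
  obtain a' b' where b': "b' \<noteq> 0" "\<not> int p dvd b'" and r': "r' = of_int a' / of_int b'"
    and a': "[a' = m' * b'] (mod int p)"
    using rat_cong_of_intE[OF assms(1,3)] .
  have "b * b' \<noteq> 0" and "\<not> int p dvd b * b'"
    using assms(1) b b' by (simp_all add: prime_dvd_mult_iff)
  moreover have "[a * a' = (m * m') * (b * b')] (mod int p)"
    using cong_mult[OF a a'] by (simp add: algebra_simps)
  ultimately have "rat_cong (of_int (a * a') / of_int (b * b')) (of_int (m * m')) p"
    using rat_cong_int_frac_iff[OF assms(1)] by blast
  moreover have "r * r' = of_int (a * a') / of_int (b * b')"
    by (simp add: r r')
  ultimately show ?thesis
    by (simp only:)
qed

lemma rat_cong_diff:
  assumes "prime p" and "rat_cong r (of_int m) p" and "rat_cong r' (of_int m') p"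
  shows "rat_cong (r - r') (of_int (m - m')) p"
  using rat_cong_add[OF assms(1,2) rat_cong_mult[OF assms(1) rat_cong_of_int_of_int[OF assms(1)] assms(3)],
      of "- 1"]
  by simp

lemma rat_cong_inverse:
  assumes "prime p" and "rat_cong r (of_int m) p" and "[m * m' = 1] (mod int p)"
  shows "rat_cong (inverse r) (of_int m') p"
proof -
  obtain a b where b: "b \<noteq> 0" "\<not> int p dvd b" and r: "r = of_int a / of_int b"
    and a: "[a = m * b] (mod int p)"
    using rat_cong_of_intE[OF assms(1,2)] .
  have "[m' * a = (m * m') * b] (mod int p)"
    using cong_scalar_left[OF a, of m'] by (simp add: ac_simps)
  then have a': "[b = m' * a] (mod int p)"
    using cong_scalar_right[OF assms(3), of b] by (metis cong_sym cong_trans mult_1)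
  then have "\<not> int p dvd a"
    using b(2) cong_dvd_iff dvd_mult by blast
  then have "a \<noteq> 0"
    by auto
  then show ?thesis
    using rat_cong_int_frac_iff[OF assms(1) \<open>a \<noteq> 0\<close> \<open>\<not> int p dvd a\<close>] a' r by simp
qed

lemma rat_cong_power:
  assumes "prime p" and "rat_cong r (of_int m) p"
  shows "rat_cong (r ^ k) (of_int (m ^ k)) p"
proof (induction k)
  case 0
  show ?case
    using rat_cong_one[OF assms(1)] by simp
next
  case (Suc k)
  show ?case
    using rat_cong_mult[OF assms Suc.IH] by simp
qed

lemma rat_cong_sum:
  assumes "prime p" and "\<And>k. k \<in> K \<Longrightarrow> rat_cong (f k) (of_int (g k)) p"
  shows "rat_cong (\<Sum>k\<in>K. f k) (of_int (\<Sum>k\<in>K. g k)) p"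
  using assms(2)
proof (induction K rule: infinite_finite_induct)
  case (insert k K)
  then show ?case
    using rat_cong_add[OF assms(1) insert.prems[of k] insert.IH] by simp
qed (use rat_cong_of_int_of_int[OF assms(1), of 0] in auto)

section \<open>Binomial coefficients modulo \<open>p\<close>\<close>

lemma Suc_times_central_binomial:
  "Suc m * (2 * Suc m choose Suc m) = 2 * (2 * m + 1) * (2 * m choose m)"
proof -
  have "Suc m * (Suc m * (2 * Suc m choose Suc m)) = Suc m * (Suc (Suc (2 * m)) * (Suc (2 * m) choose m))"
    using Suc_times_binomial[of m "Suc (2 * m)"] by (simp del: binomial_Suc_Suc)
  also have "Suc (2 * m) choose m = Suc (2 * m) choose Suc m"
    using binomial_symmetric[of m "Suc (2 * m)"] by (simp add: Suc_diff_le)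
  also have "Suc m * (Suc (Suc (2 * m)) * (Suc (2 * m) choose Suc m))
      = Suc (Suc (2 * m)) * (Suc (2 * m) * (2 * m choose m))"
    using Suc_times_binomial[of m "2 * m"] by (metis mult.left_commute)
  also have "\<dots> = Suc m * (2 * (2 * m + 1) * (2 * m choose m))"
    by simp
  finally show ?thesis
    by (simp only: mult_left_cancel nat.distinct(1) mult_cancel_left) simp
qed

text \<open>Both sides change by the same factor from \<open>m\<close> to \<open>m + 1\<close>, because
  \<open>-4 (n - m) = 2 (2 m + 1) - 2 p\<close>.\<close>

lemma central_binomial_cong:
  assumes "prime p" and "p = 2 * n + 1" and "m \<le> n"
  shows "[int (2 * m choose m) = (-4) ^ m * int (n choose m)] (mod int p)"
  using assms(3)
proof (induction m)
  case 0
  then show ?case by simp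
next
  case (Suc m)
  have IH: "[int (2 * m choose m) = (-4) ^ m * int (n choose m)] (mod int p)"
    using Suc by simp
  have "int (Suc m) * int (2 * Suc m choose Suc m) = 2 * (2 * int m + 1) * int (2 * m choose m)"
    using arg_cong[OF Suc_times_central_binomial[of m], of int]
    by (simp del: binomial_Suc_Suc add: algebra_simps)
  also have "[\<dots> = 2 * (2 * int m + 1) * ((-4) ^ m * int (n choose m))] (mod int p)"
    using IH by (rule cong_scalar_left)
  also have "2 * (2 * int m + 1) * ((-4) ^ m * int (n choose m))
      = (-4) ^ Suc m * ((int n - int m) * int (n choose m)) + (2 * (-4) ^ m * int (n choose m)) * int p"
    using assms(2) by (simp add: algebra_simps)
  also have "[\<dots> = (-4) ^ Suc m * ((int n - int m) * int (n choose m))] (mod int p)"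
    by (simp add: cong_iff_dvd_diff)
  also have "(int n - int m) * int (n choose m) = int (Suc m) * int (n choose Suc m)"
  proof -
    have "(n - m) * (n choose m) = Suc m * (n choose Suc m)"
      using binomial_absorb_comp[of n m] binomial_absorption[of m n] by simp
    then have "int (n - m) * int (n choose m) = int (Suc m) * int (n choose Suc m)"
      by (metis of_nat_mult)
    with Suc.prems show ?thesis
      by (simp add: of_nat_diff)
  qed
  finally have "[int (Suc m) * int (2 * Suc m choose Suc m) = int (Suc m) * ((-4) ^ Suc m * int (n choose Suc m))] (mod int p)"
    by (simp only: ac_simps)
  moreover have "\<not> p dvd Suc m"
    using assms(2) Suc.prems by (auto dest: dvd_imp_le)
  then have "\<not> [int (Suc m) = 0] (mod int p)"
    by (simp only: cong_0_iff int_dvd_int_iff not_False_eq_True)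
  ultimately show ?case
    using cong_mult_lcancel_prime[OF assms(1)] by blast
qed
lemma binomial_pred_prime_cong:
  assumes "prime p" and "j \<le> p - 1"
  shows "[int (p - 1 choose j) = (-1) ^ j] (mod int p)"
  using assms(2)
proof (induction j)
  case 0
  then show ?case by simp
next
  case (Suc j)
  have "p choose Suc j = (p - 1 choose j) + (p - 1 choose Suc j)"
    using binomial_Suc_Suc[of "p - 1" j] assms(1) by (simp add: prime_gt_0_nat)
  moreover have "p dvd p choose Suc j"
    using dvd_choose_prime[of "Suc j" p] Suc.prems assms(1) by (simp add: prime_gt_0_nat)
  ultimately have "[int (p - 1 choose j) + int (p - 1 choose Suc j) = 0] (mod int p)"
    by (metis cong_0_iff int_dvd_int_iff of_nat_add)
  moreover have "[int (p - 1 choose j) = (-1) ^ j] (mod int p)"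
    using Suc by simp
  ultimately have "[(-1) ^ j + int (p - 1 choose Suc j) = 0] (mod int p)"
    by (metis cong_add_rcancel cong_sym cong_trans)
  then show ?case
    by (simp add: cong_iff_dvd_diff add.commute)
qed

section \<open>Even and odd parts of \<open>(1 + r)^m\<close>\<close>

definition binom_even :: "nat \<Rightarrow> 'a::comm_ring_1 \<Rightarrow> 'a" where
  "binom_even m s = (\<Sum>k\<le>m. of_nat (m choose (2 * k)) * s ^ k)"

definition binom_odd :: "nat \<Rightarrow> 'a::comm_ring_1 \<Rightarrow> 'a" where
  "binom_odd m s = (\<Sum>k\<le>m. of_nat (m choose (2 * k + 1)) * s ^ k)"

lemma one_plus_power_eq_binom_even_odd:
  fixes r :: "'a::comm_ring_1"
  shows "(1 + r) ^ m = binom_even m (r\<^sup>2) + r * binom_odd m (r\<^sup>2)"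
proof -
  define g where "g i = of_nat (m choose i) * r ^ i" for i
  have "(1 + r) ^ m = (\<Sum>i\<le>m. g i)"
    unfolding g_def using binomial_ring[of r 1 m] by (simp add: add.commute)
  also have "\<dots> = (\<Sum>i\<le>Suc (2 * m). g i)"
    by (rule sum.mono_neutral_left) (auto simp: g_def binomial_eq_0)
  also have "\<dots> = (\<Sum>k\<le>m. g (2 * k) + g (Suc (2 * k)))"
    by (rule sum.in_pairs_0)
  also have "\<dots> = binom_even m (r\<^sup>2) + r * binom_odd m (r\<^sup>2)"
    unfolding binom_even_def binom_odd_def g_def sum.distrib sum_distrib_left
    by (intro arg_cong2[where f = "(+)"] sum.cong)
      (simp_all add: ac_simps flip: power_mult)
  finally show ?thesis .
qed

lemma one_minus_power_eq_binom_even_odd: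
  fixes r :: "'a::comm_ring_1"
  shows "(1 - r) ^ m = binom_even m (r\<^sup>2) - r * binom_odd m (r\<^sup>2)"
  using one_plus_power_eq_binom_even_odd[of "- r" m] by simp

lemma of_int_binom_even: "of_int (binom_even m s) = binom_even m (of_int s)"
  by (simp add: binom_even_def)

lemma of_int_binom_odd: "of_int (binom_odd m s) = binom_odd m (of_int s)"
  by (simp add: binom_odd_def)

text \<open>A polynomial identity in \<open>s\<close>, checked in \<open>\<complex>\<close> with \<open>r = \<surd>s\<close> by squaring \<open>(1 \<plusminus> r)^m\<close>.\<close>

lemma binom_even_odd_double:
  fixes s :: int
  assumes "s \<noteq> 0"
  shows "binom_even (2 * m) s = (binom_even m s)\<^sup>2 + s * (binom_odd m s)\<^sup>2"
    and "binom_odd (2 * m) s = 2 * binom_even m s * binom_odd m s"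
proof -
  define r where "r = csqrt (of_int s)"
  have r2: "r\<^sup>2 = of_int s" and "r \<noteq> 0"
    using assms by (auto simp: r_def)
  define E F G H where "E = binom_even m (of_int s :: complex)" and "F = binom_odd m (of_int s :: complex)"
    and "G = binom_even (2 * m) (of_int s :: complex)" and "H = binom_odd (2 * m) (of_int s :: complex)"
  have plus: "G + r * H = (E + r * F)\<^sup>2" and minus: "G - r * H = (E - r * F)\<^sup>2"
    using one_plus_power_eq_binom_even_odd[of r "2 * m"] one_plus_power_eq_binom_even_odd[of r m]
      one_minus_power_eq_binom_even_odd[of r "2 * m"] one_minus_power_eq_binom_even_odd[of r m]
    unfolding E_def F_def G_def H_def r2 by (simp_all add: power_mult mult.commute)
  have "2 * G = (G + r * H) + (G - r * H)"
    by simp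
  also have "\<dots> = 2 * (E\<^sup>2 + r\<^sup>2 * F\<^sup>2)"
    unfolding plus minus by (simp add: power2_eq_square algebra_simps)
  finally have "G = E\<^sup>2 + r\<^sup>2 * F\<^sup>2"
    by (simp only: mult_cancel_left) simp
  have "r * (2 * H) = (G + r * H) - (G - r * H)"
    by simp
  also have "\<dots> = r * (2 * (2 * E * F))"
    unfolding plus minus by (simp add: power2_eq_square algebra_simps)
  finally have "H = 2 * E * F"
    using \<open>r \<noteq> 0\<close> by simp
  then show "binom_even (2 * m) s = (binom_even m s)\<^sup>2 + s * (binom_odd m s)\<^sup>2"
    and "binom_odd (2 * m) s = 2 * binom_even m s * binom_odd m s"
    using \<open>G = E\<^sup>2 + r\<^sup>2 * F\<^sup>2\<close> r2
    unfolding E_def F_def G_def H_def of_int_eq_iff[where 'a = complex, symmetric]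
    by (simp_all add: of_int_binom_even of_int_binom_odd)
qed
lemma cong_binom_even:
  fixes s s' :: int
  assumes "[s = s'] (mod q)"
  shows "[binom_even m s = binom_even m s'] (mod q)"
  unfolding binom_even_def using assms by (intro cong_sum cong_mult cong_pow cong_refl)

lemma binom_even_pred_prime_cong:
  fixes s :: int
  assumes "prime p" and "p = 2 * n + 1"
  shows "[binom_even (2 * n) s = (\<Sum>k\<le>n. s ^ k)] (mod int p)"
proof -
  have "binom_even (2 * n) s = (\<Sum>k\<le>n. int (2 * n choose (2 * k)) * s ^ k)"
    unfolding binom_even_def by (rule sum.mono_neutral_right) (auto simp: binomial_eq_0)
  also have "[\<dots> = (\<Sum>k\<le>n. 1 * s ^ k)] (mod int p)"
  proof (intro cong_sum cong_mult cong_refl)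
    fix k assume "k \<in> {..n}"
    then show "[int (2 * n choose (2 * k)) = 1] (mod int p)"
      using binomial_pred_prime_cong[OF assms(1), of "2 * k"] assms(2) by (simp add: power_mult)
  qed
  finally show ?thesis
    by simp
qed

lemma binom_odd_pred_prime_cong:
  fixes s :: int
  assumes "prime p" and "p = 2 * n + 1"
  shows "[binom_odd (2 * n) s = - (\<Sum>k<n. s ^ k)] (mod int p)"
proof -
  have "binom_odd (2 * n) s = (\<Sum>k<n. int (2 * n choose (2 * k + 1)) * s ^ k)"
    unfolding binom_odd_def by (rule sum.mono_neutral_right) (auto simp: binomial_eq_0)
  also have "[\<dots> = (\<Sum>k<n. (- 1) * s ^ k)] (mod int p)"
  proof (intro cong_sum cong_mult cong_refl)
    fix k assume "k \<in> {..<n}"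
    then show "[int (2 * n choose (2 * k + 1)) = - 1] (mod int p)"
      using binomial_pred_prime_cong[OF assms(1), of "2 * k + 1"] assms(2) by (simp add: power_mult)
  qed
  finally show ?thesis
    by (simp add: sum_negf)
qed

section \<open>Quadratic residues\<close>

lemma power_half_cong_QuadRes:
  fixes a :: int
  assumes "prime p" and "odd p" and "\<not> [a = 0] (mod int p)"
  shows "[a ^ ((p - 1) div 2) = (if QuadRes (int p) a then 1 else - 1)] (mod int p)"
proof -
  have "2 < p"
    using assms(1,2) prime_ge_2_nat[OF assms(1)] by (cases "p = 2") auto
  then have "[Legendre a (int p) = a ^ ((p - 1) div 2)] (mod int p)"
    using euler_criterion[OF assms(1)] by blast
  then show ?thesis
    using assms(3) unfolding Legendre_def by (auto dest: cong_sym)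
qed

lemma QuadRes_iff_of_QuadRes_mult:
  fixes a b :: int
  assumes "prime p" and "odd p" and "\<not> [a = 0] (mod int p)" and "\<not> [b = 0] (mod int p)"
    and "QuadRes (int p) (a * b)"
  shows "QuadRes (int p) a \<longleftrightarrow> QuadRes (int p) b"
proof -
  let ?n = "(p - 1) div 2"
  have "\<not> [a * b = 0] (mod int p)"
    using assms(3,4) cong_mult_eq_0_prime_iff[OF assms(1)] by blast
  then have "[(a * b) ^ ?n = 1] (mod int p)"
    using power_half_cong_QuadRes[OF assms(1,2), of "a * b"] assms(5) by simp
  then have "[1 = (a * b) ^ ?n] (mod int p)"
    by (rule cong_sym)
  also have "(a * b) ^ ?n = a ^ ?n * b ^ ?n"
    by (rule power_mult_distrib)
  also have "[\<dots> = (if QuadRes (int p) a then 1 else - 1) * (if QuadRes (int p) b then 1 else - 1)] (mod int p)"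
    using power_half_cong_QuadRes[OF assms(1,2,3)] power_half_cong_QuadRes[OF assms(1,2,4)]
    by (rule cong_mult)
  finally show ?thesis
    using odd_prime_one_not_cong_neg_one[OF assms(1,2)]
    by (cases "QuadRes (int p) a"; cases "QuadRes (int p) b") simp_all
qed

lemma QuadRes_iff_exists_scaled_square:
  fixes r t :: int
  assumes "prime p" and "\<not> [r = 0] (mod int p)"
  shows "QuadRes (int p) t \<longleftrightarrow> (\<exists>y. [(r * y)\<^sup>2 = t] (mod int p))"
proof
  assume "QuadRes (int p) t"
  then obtain z where z: "[z\<^sup>2 = t] (mod int p)"
    unfolding QuadRes_def by blast
  obtain r' where "[r * r' = 1] (mod int p)"
    using prime_cong_inverse_exists[OF assms] .
  then have "[(r * r' * z)\<^sup>2 = (1 * z)\<^sup>2] (mod int p)"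
    by (intro cong_pow cong_scalar_right)
  then have "[(r * (r' * z))\<^sup>2 = z\<^sup>2] (mod int p)"
    by (simp add: mult.assoc)
  then have "[(r * (r' * z))\<^sup>2 = t] (mod int p)"
    using z by (rule cong_trans)
  then show "\<exists>y. [(r * y)\<^sup>2 = t] (mod int p)" ..
qed (unfold QuadRes_def, blast)

section \<open>The quartic congruence and the binomial sum\<close>

lemma exists_quartic_cong_iff_QuadRes:
  fixes s r :: int
  assumes "prime p" and "[s = r\<^sup>2] (mod int p)" and "\<not> [r = 0] (mod int p)"
  shows "(\<exists>y. [(s * y\<^sup>2 - 1)\<^sup>2 = s] (mod int p))
    \<longleftrightarrow> QuadRes (int p) (1 + r) \<or> QuadRes (int p) (1 - r)"
proof -
  have "[(s * y\<^sup>2 - 1)\<^sup>2 = s] (mod int p)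
      \<longleftrightarrow> [(r * y)\<^sup>2 = 1 + r] (mod int p) \<or> [(r * y)\<^sup>2 = 1 - r] (mod int p)" for y
  proof -
    have sy: "[s * y\<^sup>2 = (r * y)\<^sup>2] (mod int p)"
      using cong_scalar_right[OF assms(2)] by (simp add: power_mult_distrib)
    have "[(s * y\<^sup>2 - 1)\<^sup>2 = s] (mod int p) \<longleftrightarrow> [(s * y\<^sup>2 - 1)\<^sup>2 = r\<^sup>2] (mod int p)"
      using assms(2) by (meson cong_sym cong_trans)
    also have "\<dots> \<longleftrightarrow> [s * y\<^sup>2 - 1 = r] (mod int p) \<or> [s * y\<^sup>2 - 1 = - r] (mod int p)"
      by (rule cong_square_iff[OF assms(1)])
    also have "\<dots> \<longleftrightarrow> [s * y\<^sup>2 = 1 + r] (mod int p) \<or> [s * y\<^sup>2 = 1 - r] (mod int p)"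
      by (simp add: cong_iff_dvd_diff algebra_simps)
    also have "\<dots> \<longleftrightarrow> [(r * y)\<^sup>2 = 1 + r] (mod int p) \<or> [(r * y)\<^sup>2 = 1 - r] (mod int p)"
      using sy by (meson cong_sym cong_trans)
    finally show ?thesis .
  qed
  then show ?thesis
    using QuadRes_iff_exists_scaled_square[OF assms(1,3)] by auto
qed

lemma binom_even_half_cong_1_iff_QuadRes:
  fixes s r :: int
  assumes "prime p" and "odd p" and "[s = r\<^sup>2] (mod int p)"
    and "\<not> [(1 + r) * (1 - r) = 0] (mod int p)" and "QuadRes (int p) ((1 + r) * (1 - r))"
  shows "[binom_even ((p - 1) div 2) s = 1] (mod int p) \<longleftrightarrow> QuadRes (int p) (1 + r)"
proof -
  let ?n = "(p - 1) div 2" and ?\<chi> = "if QuadRes (int p) (1 + r) then 1 else - 1 :: int"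
  have nz: "\<not> [1 + r = 0] (mod int p)" "\<not> [1 - r = 0] (mod int p)"
    using assms(4) by (auto simp: cong_0_iff)
  have "QuadRes (int p) (1 - r) \<longleftrightarrow> QuadRes (int p) (1 + r)"
    using QuadRes_iff_of_QuadRes_mult[OF assms(1,2) nz assms(5)] by simp
  then have minus: "[(1 - r) ^ ?n = ?\<chi>] (mod int p)"
    using power_half_cong_QuadRes[OF assms(1,2) nz(2)] by simp
  have "[2 * binom_even ?n s = 2 * binom_even ?n (r\<^sup>2)] (mod int p)"
    using cong_binom_even[OF assms(3)] by (rule cong_scalar_left)
  also have "2 * binom_even ?n (r\<^sup>2) = (1 + r) ^ ?n + (1 - r) ^ ?n"
    using one_plus_power_eq_binom_even_odd[of r ?n] one_minus_power_eq_binom_even_odd[of r ?n]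
    by simp
  also have "[\<dots> = ?\<chi> + ?\<chi>] (mod int p)"
    using power_half_cong_QuadRes[OF assms(1,2) nz(1)] minus by (rule cong_add)
  also have "?\<chi> + ?\<chi> = 2 * ?\<chi>"
    by simp
  finally have E: "[binom_even ?n s = ?\<chi>] (mod int p)"
    by (simp only: cong_mult_2_cancel_odd_prime[OF assms(1,2)])
  show ?thesis
  proof (cases "QuadRes (int p) (1 + r)")
    case False
    then have "[binom_even ?n s = - 1] (mod int p)"
      using E by simp
    then show ?thesis
      using False odd_prime_one_not_cong_neg_one[OF assms(1,2)] by (meson cong_sym cong_trans)
  qed (use E in simp)
qed

text \<open>The arithmetic of \<open>(1 + \<surd>s)^n\<close> in the quadratic extension of \<open>\<int>/p\<close>, written out on
  the coordinates \<open>E = binom_even n s\<close>, \<open>F = binom_odd n s\<close>: comparing the doubling formulas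
  with \<open>binom (p - 1) j \<equiv> (-1)^j\<close> and \<open>s^n \<equiv> -1\<close> gives \<open>(1 - s) F \<equiv> -1\<close> and then \<open>2 s \<equiv> 1\<close>.\<close>

lemma binom_even_half_cong_1_imp_cong_half:
  fixes s :: int
  assumes "prime p" and "odd p" and "\<not> QuadRes (int p) s"
    and E: "[binom_even ((p - 1) div 2) s = 1] (mod int p)"
  shows "[2 * s = 1] (mod int p)"
proof -
  define n where "n = (p - 1) div 2"
  define E F where "E = binom_even n s" and "F = binom_odd n s"
  have p: "p = 2 * n + 1"
    using assms(2) by (simp add: n_def)
  have s0: "\<not> [s = 0] (mod int p)"
  proof
    assume "[s = 0] (mod int p)"
    then have "[0\<^sup>2 = s] (mod int p)"
      by (simp add: cong_sym)
    then show False
      using assms(3) unfolding QuadRes_def by blast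
  qed
  then have "s \<noteq> 0"
    by auto
  have sn: "[s ^ n = - 1] (mod int p)"
    using power_half_cong_QuadRes[OF assms(1,2) s0] assms(3) by (simp add: n_def)
  have E1: "[E = 1] (mod int p)"
    using E by (simp add: E_def n_def)
  have "2 * ((1 - s) * F) = (1 - s) * (2 * 1 * F)"
    by simp
  also have "[\<dots> = (1 - s) * (2 * E * F)] (mod int p)"
    by (intro cong_scalar_left cong_scalar_right) (rule cong_sym[OF E1])
  also have "[(1 - s) * (2 * E * F) = - ((1 - s) * (\<Sum>k<n. s ^ k))] (mod int p)"
    using cong_scalar_left[OF binom_odd_pred_prime_cong[OF assms(1) p, of s], of "1 - s"]
    by (simp add: E_def F_def binom_even_odd_double(2)[OF \<open>s \<noteq> 0\<close>])
  also have "- ((1 - s) * (\<Sum>k<n. s ^ k)) = - (1 - s ^ n)"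
    by (simp add: one_diff_power_eq)
  also have "[\<dots> = 2 * (- 1)] (mod int p)"
    using cong_uminus[OF cong_diff[OF cong_refl sn, of 1]] by simp
  finally have F: "[(1 - s) * F = - 1] (mod int p)"
    by (simp only: cong_mult_2_cancel_odd_prime[OF assms(1,2)])
  have "(1 - s) * (1 + s) = (1 - s) * (1 - s * (- 1))"
    by simp
  also have "[\<dots> = (1 - s) * (1 - s * s ^ n)] (mod int p)"
    using sn by (intro cong_scalar_left cong_diff cong_refl) (metis cong_sym)
  also have "(1 - s) * (1 - s * s ^ n) = (1 - s)\<^sup>2 * (\<Sum>k\<le>n. s ^ k)"
    using sum_gp_basic[of s n] by (simp add: power2_eq_square)
  also have "[\<dots> = (1 - s)\<^sup>2 * (E\<^sup>2 + s * F\<^sup>2)] (mod int p)"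
    using binom_even_pred_prime_cong[OF assms(1) p, of s] binom_even_odd_double(1)[OF \<open>s \<noteq> 0\<close>]
    by (simp add: E_def F_def cong_scalar_left cong_sym)
  also have "(1 - s)\<^sup>2 * (E\<^sup>2 + s * F\<^sup>2) = (1 - s)\<^sup>2 * E\<^sup>2 + s * ((1 - s) * F)\<^sup>2"
    by (simp add: power2_eq_square algebra_simps)
  also have "[\<dots> = (1 - s)\<^sup>2 * 1\<^sup>2 + s * (- 1)\<^sup>2] (mod int p)"
    using E1 F by (intro cong_add cong_scalar_left cong_pow)
  finally have "[s * 1 = s * (2 * s)] (mod int p)"
    by (simp add: cong_iff_dvd_diff power2_eq_square algebra_simps)
  then have "[1 = 2 * s] (mod int p)"
    using cong_mult_lcancel_prime[OF assms(1) s0] by blast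
  then show ?thesis
    by (rule cong_sym)
qed
lemma exists_quartic_cong_iff_binom_even:
  fixes s c :: int
  assumes "prime p" and "odd p" and sc: "[s * (c\<^sup>2 + 1) = 1] (mod int p)"
    and "\<not> [c = 0] (mod int p)" and "\<not> [c\<^sup>2 = 1] (mod int p)"
  shows "(\<exists>y. [(s * y\<^sup>2 - 1)\<^sup>2 = s] (mod int p))
    \<longleftrightarrow> [binom_even ((p - 1) div 2) s = 1] (mod int p)"
proof (cases "QuadRes (int p) s")
  case True
  then obtain r where "[r\<^sup>2 = s] (mod int p)"
    unfolding QuadRes_def by blast
  then have r: "[s = r\<^sup>2] (mod int p)"
    by (rule cong_sym)
  have "\<not> [r = 0] (mod int p)"
  proof
    assume "[r = 0] (mod int p)"
    then have "[r\<^sup>2 = 0] (mod int p)"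
      using cong_pow[of r 0 "int p" 2] by simp
    then have "[s = 0] (mod int p)"
      using cong_trans[OF r] by blast
    then show False
      using not_cong_0_if_cong_mult_eq_1[OF assms(1) sc] by blast
  qed
  have "[r\<^sup>2 * (c\<^sup>2 + 1) = s * (c\<^sup>2 + 1)] (mod int p)"
    using cong_sym[OF r] by (rule cong_scalar_right)
  then have "[r\<^sup>2 * (c\<^sup>2 + 1) = 1] (mod int p)"
    using sc by (rule cong_trans)
  then have "[(c * r)\<^sup>2 = (1 + r) * (1 - r)] (mod int p)"
    by (simp add: cong_iff_dvd_diff power2_eq_square algebra_simps)
  moreover have "\<not> [(c * r)\<^sup>2 = 0] (mod int p)"
    using assms(4) \<open>\<not> [r = 0] (mod int p)\<close> cong_mult_eq_0_prime_iff[OF assms(1)]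
    by (simp add: power2_eq_square)
  ultimately have nz: "\<not> [(1 + r) * (1 - r) = 0] (mod int p)"
    and QR: "QuadRes (int p) ((1 + r) * (1 - r))"
    unfolding QuadRes_def by (blast dest: cong_trans)+
  then have "\<not> [1 + r = 0] (mod int p)" and "\<not> [1 - r = 0] (mod int p)"
    using cong_mult_eq_0_prime_iff[OF assms(1)] by blast+
  then have "QuadRes (int p) (1 + r) \<longleftrightarrow> QuadRes (int p) (1 - r)"
    using QuadRes_iff_of_QuadRes_mult[OF assms(1,2) _ _ QR] by blast
  then show ?thesis
    using exists_quartic_cong_iff_QuadRes[OF assms(1) r \<open>\<not> [r = 0] (mod int p)\<close>]
      binom_even_half_cong_1_iff_QuadRes[OF assms(1,2) r nz QR]
    by blast
next
  case False
  have "\<not> [binom_even ((p - 1) div 2) s = 1] (mod int p)"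
  proof
    assume "[binom_even ((p - 1) div 2) s = 1] (mod int p)"
    then have "[2 * s = 1] (mod int p)"
      using binom_even_half_cong_1_imp_cong_half[OF assms(1,2) False] by blast
    then have "[c\<^sup>2 + 1 = 2 * s * (c\<^sup>2 + 1)] (mod int p)"
      using cong_scalar_right[of _ _ _ "c\<^sup>2 + 1"] cong_sym by fastforce
    also have "2 * s * (c\<^sup>2 + 1) = 2 * (s * (c\<^sup>2 + 1))"
      by simp
    also have "[\<dots> = 2 * 1] (mod int p)"
      using sc by (rule cong_scalar_left)
    finally show False
      using assms(5) by (simp add: cong_iff_dvd_diff)
  qed
  moreover have "\<not> [(s * y\<^sup>2 - 1)\<^sup>2 = s] (mod int p)" for y
    using False by (auto simp: QuadRes_def)
  ultimately show ?thesis
    by blast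
qed

lemma central_binomial_sum_cong:
  fixes t :: int
  assumes "prime p" and "odd p"
  shows "[(\<Sum>k=1..p div 4. int (4 * k choose (2 * k)) * t ^ k)
    = binom_even ((p - 1) div 2) (16 * t) - 1] (mod int p)"
proof -
  define n where "n = (p - 1) div 2"
  have p: "p = 2 * n + 1" and q: "p div 4 = n div 2"
    using assms(2) by (auto simp: n_def elim!: oddE)
  have "binom_even n (16 * t) = (\<Sum>k\<le>n div 2. int (n choose (2 * k)) * (16 * t) ^ k)"
    unfolding binom_even_def by (rule sum.mono_neutral_right) (auto simp: binomial_eq_0)
  also have "{..n div 2} = insert 0 {1..n div 2}"
    by auto
  finally have "binom_even n (16 * t) - 1 = (\<Sum>k=1..n div 2. int (n choose (2 * k)) * (16 * t) ^ k)"
    by simp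
  moreover have "[(\<Sum>k=1..n div 2. int (4 * k choose (2 * k)) * t ^ k)
      = (\<Sum>k=1..n div 2. int (n choose (2 * k)) * (16 * t) ^ k)] (mod int p)"
  proof (rule cong_sum)
    fix k assume "k \<in> {1..n div 2}"
    then have "2 * k \<le> n"
      by auto
    then have "[int (4 * k choose (2 * k)) * t ^ k = 16 ^ k * int (n choose (2 * k)) * t ^ k] (mod int p)"
      using central_binomial_cong[OF assms(1) p, of "2 * k"] by (simp add: power_mult cong_scalar_right)
    then show "[int (4 * k choose (2 * k)) * t ^ k = int (n choose (2 * k)) * (16 * t) ^ k] (mod int p)"
      by (simp add: power_mult_distrib ac_simps)
  qed
  ultimately show ?thesis
    unfolding n_def[symmetric] q by simp
qed

theorem quartic_cong_solvable_iff_central_binomial_sum: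
  fixes c t :: int
  assumes "prime p" and "odd p"
    and "\<not> [c = 0] (mod int p)" and "\<not> [c = 1] (mod int p)" and "\<not> [c = - 1] (mod int p)"
    and t: "[16 * (c\<^sup>2 + 1) * t = 1] (mod int p)"
  shows "(\<exists>x. [x ^ 4 - 2 * (c\<^sup>2 + 1) * x\<^sup>2 + c\<^sup>2 * (c\<^sup>2 + 1) = 0] (mod int p))
    \<longleftrightarrow> [(\<Sum>k=1..p div 4. int (4 * k choose (2 * k)) * t ^ k) = 0] (mod int p)"
proof -
  define s where "s = 16 * t"
  have sc: "[s * (c\<^sup>2 + 1) = 1] (mod int p)"
    using t by (simp add: s_def ac_simps)
  have "\<not> [s\<^sup>2 = 0] (mod int p)"
    using not_cong_0_if_cong_mult_eq_1[OF assms(1) sc] cong_mult_eq_0_prime_iff[OF assms(1), of s s]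
    by (simp add: power2_eq_square)
  have c2: "\<not> [c\<^sup>2 = 1] (mod int p)"
    using assms(4,5) cong_square_iff[OF assms(1), of c 1] by simp
  have quartic: "[x ^ 4 - 2 * (c\<^sup>2 + 1) * x\<^sup>2 + c\<^sup>2 * (c\<^sup>2 + 1) = 0] (mod int p)
      \<longleftrightarrow> [(s * x\<^sup>2 - 1)\<^sup>2 = s] (mod int p)" for x
  proof -
    have "s\<^sup>2 * (x ^ 4 - 2 * (c\<^sup>2 + 1) * x\<^sup>2 + c\<^sup>2 * (c\<^sup>2 + 1))
        = (s * x\<^sup>2 - s * (c\<^sup>2 + 1))\<^sup>2 - s * (s * (c\<^sup>2 + 1))"
      by (simp add: power2_eq_square power4_eq_xxxx algebra_simps)
    also have "[\<dots> = (s * x\<^sup>2 - 1)\<^sup>2 - s * 1] (mod int p)"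
      using sc by (intro cong_diff cong_pow cong_scalar_left cong_refl)
    finally have eq: "[s\<^sup>2 * (x ^ 4 - 2 * (c\<^sup>2 + 1) * x\<^sup>2 + c\<^sup>2 * (c\<^sup>2 + 1)) = (s * x\<^sup>2 - 1)\<^sup>2 - s] (mod int p)"
      by simp
    have "[x ^ 4 - 2 * (c\<^sup>2 + 1) * x\<^sup>2 + c\<^sup>2 * (c\<^sup>2 + 1) = 0] (mod int p)
        \<longleftrightarrow> [s\<^sup>2 * (x ^ 4 - 2 * (c\<^sup>2 + 1) * x\<^sup>2 + c\<^sup>2 * (c\<^sup>2 + 1)) = s\<^sup>2 * 0] (mod int p)"
      by (rule cong_mult_lcancel_prime[OF assms(1) \<open>\<not> [s\<^sup>2 = 0] (mod int p)\<close>, symmetric])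
    also have "\<dots> \<longleftrightarrow> [(s * x\<^sup>2 - 1)\<^sup>2 - s = 0] (mod int p)"
      using eq by (simp only: mult_zero_right) (meson cong_sym cong_trans)
    finally show ?thesis
      by (simp add: cong_iff_dvd_diff)
  qed
  have "[(\<Sum>k=1..p div 4. int (4 * k choose (2 * k)) * t ^ k) = binom_even ((p - 1) div 2) s - 1] (mod int p)"
    unfolding s_def by (rule central_binomial_sum_cong[OF assms(1,2)])
  then have "[(\<Sum>k=1..p div 4. int (4 * k choose (2 * k)) * t ^ k) = 0] (mod int p)
      \<longleftrightarrow> [binom_even ((p - 1) div 2) s - 1 = 0] (mod int p)"
    by (meson cong_sym cong_trans)
  also have "\<dots> \<longleftrightarrow> [binom_even ((p - 1) div 2) s = 1] (mod int p)"
    by (simp add: cong_iff_dvd_diff)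
  finally show ?thesis
    using exists_quartic_cong_iff_binom_even[OF assms(1,2) sc assms(3) c2] by (simp only: quartic)
qed

theorem corollary2p4:
  fixes p :: nat and c :: rat
  assumes "prime p" and "odd p"
    and "in_Zp p c"
    and "\<not> rat_cong c 0 p" and "\<not> rat_cong c 1 p" and "\<not> rat_cong c (-1) p"
    and "\<not> rat_cong (c^2 + 1) 0 p"
  shows "(\<exists>x::int. rat_cong ((of_int x)^4 - 2*(c^2+1)*(of_int x)^2 + c^2*(c^2+1)) 0 p)
     \<longleftrightarrow> rat_cong (\<Sum>k=1..p div 4. of_nat ((4*k) choose (2*k)) / (16*(c^2+1))^k) 0 p"
proof -
  note rat_cong_intros = rat_cong_add rat_cong_diff rat_cong_mult rat_cong_power
    rat_cong_of_int_of_int rat_cong_numeral rat_cong_one assms(1)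
  obtain c' where c: "rat_cong c (of_int c') p"
    using in_Zp_imp_rat_cong_of_int[OF assms(1,3)] .
  have c': "\<not> [c' = 0] (mod int p)" "\<not> [c' = 1] (mod int p)" "\<not> [c' = - 1] (mod int p)"
    using assms(4-6) rat_cong_of_int_cong_iff[OF assms(1) c, of 0] rat_cong_of_int_cong_iff[OF assms(1) c, of 1]
      rat_cong_of_int_cong_iff[OF assms(1) c, of "- 1"]
    by simp_all
  have "rat_cong (c\<^sup>2 + 1) (of_int (c'\<^sup>2 + 1)) p"
    using c by (intro rat_cong_intros)
  then have "\<not> [c'\<^sup>2 + 1 = 0] (mod int p)"
    using assms(7) rat_cong_0_iff[OF assms(1)] by blast
  then have "\<not> [16 * (c'\<^sup>2 + 1) = 0] (mod int p)"
    unfolding cong_mult_eq_0_prime_iff[OF assms(1)]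
    using odd_prime_not_dvd_power_2[OF assms(1,2), of 4] by (simp add: cong_0_iff)
  then obtain t where t: "[16 * (c'\<^sup>2 + 1) * t = 1] (mod int p)"
    using prime_cong_inverse_exists[OF assms(1)] by blast
  have "rat_cong (inverse (16 * (c\<^sup>2 + 1))) (of_int t) p"
    using c by (intro rat_cong_inverse[OF assms(1) _ t] rat_cong_intros)
  then have "rat_cong (\<Sum>k=1..p div 4. of_nat ((4*k) choose (2*k)) / (16*(c^2+1))^k) 0 p
      \<longleftrightarrow> [(\<Sum>k=1..p div 4. int (4 * k choose (2 * k)) * t ^ k) = 0] (mod int p)"
    unfolding divide_inverse power_inverse[symmetric]
    by (intro rat_cong_0_iff rat_cong_sum rat_cong_intros) (metis assms(1) of_int_of_nat_eq rat_cong_of_int_of_int)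
  moreover have "rat_cong ((of_int x)^4 - 2*(c^2+1)*(of_int x)^2 + c^2*(c^2+1)) 0 p
      \<longleftrightarrow> [x ^ 4 - 2 * (c'\<^sup>2 + 1) * x\<^sup>2 + c'\<^sup>2 * (c'\<^sup>2 + 1) = 0] (mod int p)" for x :: int
    using c by (intro rat_cong_0_iff rat_cong_intros)
  ultimately show ?thesis
    using quartic_cong_solvable_iff_central_binomial_sum[OF assms(1,2) c' t] by simp
qed

end
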